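(* Let $D=\{x\in\mathbb{R}^2:\|x\|<1\}$ be the open unit disk. Consider the decomposition of $D$ given by an inscribed equilateral triangle: the four pieces are the closed triangle intersected with $D$ and the three closed circular segments cut off by its sides, intersected with $D$; each of these has diameter $\sqrt{3}$, and at most two of them meet at any point of $D$. Then this decomposition has least diameter among all smooth decompositions of $D$ into relatively closed sets meeting at most two at a point: that is, every smooth decomposition of $D$ into relatively closed subsets of $D$ with pairwise disjoint interiors, such that no point of $D$ lies in three or more pieces, has a piece of diameter at least $\sqrt{3}$.
   Context: A decomposition of $D$ is a locally finite collection of relatively closed subsets of $D$ (pieces) with pairwise disjoint interiors whose union is $D$; it is smooth if the pieces are bounded by smooth curves. Diameters are Euclidean. *)

theory Defs
  imports "HOL-Analysis.Analysis"
begin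

definition decomposition :: "(real^2) set \<Rightarrow> (real^2) set set \<Rightarrow> bool" where
  "decomposition D \<P> \<longleftrightarrow>
     (\<forall>P\<in>\<P>. closedin (top_of_set D) P) \<and>
     (\<forall>P\<in>\<P>. \<forall>Q\<in>\<P>. P \<noteq> Q \<longrightarrow> interior P \<inter> interior Q = {}) \<and>
     \<Union>\<P> = D \<and>
     (\<forall>x\<in>D. \<exists>U. open U \<and> x \<in> U \<and> finite {P\<in>\<P>. P \<inter> U \<noteq> {}})"

definition smooth_curve :: "(real \<Rightarrow> real^2) \<Rightarrow> bool" where
  "smooth_curve g \<longleftrightarrow> g C1_differentiable_on {0..1} \<and>
     (\<forall>t\<in>{0..1}. vector_derivative g (at t within {0..1}) \<noteq> 0)"

definition smooth_decomposition :: "(real^2) set \<Rightarrow> (real^2) set set \<Rightarrow> bool" where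
  "smooth_decomposition D \<P> \<longleftrightarrow> decomposition D \<P> \<and>
     (\<forall>P\<in>\<P>. \<exists>C. (\<forall>g\<in>C. smooth_curve g) \<and>
        (\<forall>x\<in>D. \<exists>U. open U \<and> x \<in> U \<and> finite {g\<in>C. path_image g \<inter> U \<noteq> {}}) \<and>
        D \<inter> frontier P = D \<inter> \<Union>(path_image ` C))"

definition at_most_two_meet :: "(real^2) set \<Rightarrow> (real^2) set set \<Rightarrow> bool" where
  "at_most_two_meet D \<P> \<longleftrightarrow>
     \<not> (\<exists>x\<in>D. \<exists>P\<in>\<P>. \<exists>Q\<in>\<P>. \<exists>R\<in>\<P>. P \<noteq> Q \<and> P \<noteq> R \<and> Q \<noteq> R \<and> x \<in> P \<and> x \<in> Q \<and> x \<in> R)"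

definition unit_disk :: "(real^2) set" where
  "unit_disk = ball 0 1"

definition tri_vertices :: "(real^2) set" where
  "tri_vertices = {vector [1, 0], vector [-1/2, sqrt 3 / 2], vector [-1/2, - sqrt 3 / 2]}"

text \<open>The closed circular segment cut off by the side opposite vertex v is
  the part of the closed unit disk on the far side of that side, i.e. {x. x \<bullet> (-v) \<ge> 1/2}.\<close>
definition triangle_decomposition :: "(real^2) set set" where
  "triangle_decomposition =
     insert (unit_disk \<inter> convex hull tri_vertices)
       ((\<lambda>v. unit_disk \<inter> (cball 0 1 \<inter> {x. x \<bullet> (- v) \<ge> 1/2})) ` tri_vertices)"

end

theory Submission
  imports Defs
begin

(*
  The inscribed equilateral triangle cuts the unit disc into the triangle and three
  circular segments; every piece has diameter sqrt 3 (the side length), and since the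
  segments are pairwise disjoint no point lies in three pieces.

  For the lower bound, suppose every piece has diameter less than sqrt 3.  Finitely many
  pieces meet the disc of radius 9/10; their diameters are at most some M < sqrt 3, and we
  fix r < 1 with M < sqrt 3 * r.  Points of the circle of radius r at mutual distance at most
  M < sqrt 3 * r have no 0 in their convex hull (a Jung-type estimate), so the trace of such a
  piece on that circle lies in an open half-plane through 0.  Every other piece stays outside
  radius 9/10 and has diameter below 2 * 9/10, so some line through 0 misses it and cuts it
  into two parts with the same property.  This gives a finite cover of the closed disc of
  radius r by compact sets, no three of which meet, each having its trace on the boundary
  circle in a half-plane {x. x \<bullet> c < 0}.  No such cover exists: with pairwise non-parallel
  directions c_X and weights supported near each X, the vector field sum w_X c_X has at most
  two nonzero terms at every point, hence never vanishes; by Brouwer it points outward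
  somewhere on the circle, whereas there every nonzero term points inward.
*)

section \<open>Planar linear algebra\<close>

(* rot90 a \<bullet> b is the determinant of a and b; we call a and b transversal when it is
   nonzero, i.e. when they are linearly independent. *)
definition rot90 :: "real^2 \<Rightarrow> real^2" where
  "rot90 v = vector [- v$2, v$1]"

lemma inner_rot90_self [simp]: "rot90 v \<bullet> v = 0"
  by (simp add: rot90_def inner_vec_def sum_2)

lemma rot90_rot90 [simp]: "rot90 (rot90 v) = - v"
  by (simp add: rot90_def vec_eq_iff forall_2)

lemma norm_rot90 [simp]: "norm (rot90 v) = norm v"
  by (simp add: rot90_def norm_vec_def L2_set_def sum_2 add.commute)

lemma inner_rot90_skew: "rot90 a \<bullet> b = - (rot90 b \<bullet> a)"
  by (simp add: rot90_def inner_vec_def sum_2)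

lemma inner_rot90_Lagrange: "(a \<bullet> b)\<^sup>2 + (rot90 a \<bullet> b)\<^sup>2 = (norm a * norm b)\<^sup>2"
  by (simp add: rot90_def inner_vec_def norm_vec_def L2_set_def sum_2 power2_eq_square
      algebra_simps)

lemma rot90_Cramer: "(rot90 a \<bullet> b) *\<^sub>R v = (v \<bullet> b) *\<^sub>R rot90 a - (v \<bullet> a) *\<^sub>R rot90 b"
  by (simp add: rot90_def inner_vec_def vec_eq_iff forall_2 sum_2 algebra_simps)

lemma rot90_unit_expansion:
  assumes "norm m = 1"
  shows "v = (v \<bullet> m) *\<^sub>R m + (v \<bullet> rot90 m) *\<^sub>R rot90 m"
proof -
  have "rot90 m \<bullet> rot90 m = 1"
    using assms by (simp add: inner_commute power2_norm_eq_inner[symmetric])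
  then show ?thesis
    using rot90_Cramer[of m "rot90 m" v] by (simp add: algebra_simps)
qed

lemma eq_0_if_orthogonal_to_transversal_pair:
  assumes "rot90 a \<bullet> b \<noteq> 0" "a \<bullet> v = 0" "b \<bullet> v = 0"
  shows "v = 0"
  using rot90_Cramer[of a b v] assms by (simp add: inner_commute)

section \<open>Equilateral triangles inscribed in the unit circle\<close>

definition equilateral_triple :: "real^2 \<Rightarrow> real^2 \<Rightarrow> real^2 \<Rightarrow> bool" where
  "equilateral_triple a b c \<longleftrightarrow> norm a = 1 \<and> norm b = 1 \<and> norm c = 1 \<and> a + b + c = 0"

lemma equilateral_triple_rotate: "equilateral_triple a b c \<Longrightarrow> equilateral_triple b c a"
  by (simp add: equilateral_triple_def ac_simps)

lemma equilateral_triple_swap: "equilateral_triple a b c \<Longrightarrow> equilateral_triple b a c"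
  by (simp add: equilateral_triple_def ac_simps)

lemma equilateral_triple_permute:
  assumes "equilateral_triple a b c" "u \<in> {a, b, c}" "v \<in> {a, b, c}" "u \<noteq> v"
  shows "\<exists>w. equilateral_triple u v w"
  using assms equilateral_triple_rotate equilateral_triple_swap by blast

lemma equilateral_triple_vertex:
  "equilateral_triple a b c \<Longrightarrow> u \<in> {a, b, c} \<Longrightarrow> \<exists>v w. equilateral_triple u v w"
  using equilateral_triple_rotate by blast

lemma equilateral_triple_inner_sum:
  "equilateral_triple a b c \<Longrightarrow> a \<bullet> x + b \<bullet> x + c \<bullet> x = 0"
  by (metis equilateral_triple_def inner_add_left inner_zero_left)

lemma equilateral_triple_inner:
  assumes "equilateral_triple a b c"
  shows "a \<bullet> a = 1" "b \<bullet> b = 1" "c \<bullet> c = 1"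
    and "a \<bullet> b = -1/2" "b \<bullet> c = -1/2" "a \<bullet> c = -1/2"
proof -
  have n: "norm a = 1" "norm b = 1" "norm c = 1" and s: "a + b + c = 0"
    using assms by (auto simp: equilateral_triple_def)
  then show "a \<bullet> a = 1" "b \<bullet> b = 1" "c \<bullet> c = 1"
    by (simp_all add: norm_eq_1)
  have pair: "u \<bullet> v = -1/2" if "norm u = 1" "norm v = 1" "norm (u + v) = 1" for u v :: "real^2"
  proof -
    have "1 = (u + v) \<bullet> (u + v)"
      using that(3) by (simp add: norm_eq_1)
    also have "\<dots> = u \<bullet> u + 2 * (u \<bullet> v) + v \<bullet> v"
      by (simp add: inner_add_left inner_add_right inner_commute)
    finally show ?thesis
      using that(1,2) by (simp add: norm_eq_1)
  qed
  have "a + b = - c" "b + c = - a" "a + c = - b"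
    using s by (simp_all add: eq_neg_iff_add_eq_0 ac_simps)
  then show "a \<bullet> b = -1/2" "b \<bullet> c = -1/2" "a \<bullet> c = -1/2"
    using n pair[of a b] pair[of b c] pair[of a c] by simp_all
qed

lemma equilateral_triple_dist: "equilateral_triple a b c \<Longrightarrow> dist a b = sqrt 3"
  using equilateral_triple_inner[of a b c]
  by (simp add: dist_norm norm_eq_sqrt_inner inner_diff_left inner_diff_right inner_commute)

lemma equilateral_triple_inner_gt:
  assumes "equilateral_triple a b c" "norm x < 1" "a \<bullet> x \<le> -1/2"
  shows "-1/2 < b \<bullet> x" "-1/2 < c \<bullet> x"
proof -
  have "b \<bullet> x \<le> norm x" "c \<bullet> x \<le> norm x"
    using assms(1) norm_cauchy_schwarz[of b x] norm_cauchy_schwarz[of c x]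
    by (auto simp: equilateral_triple_def)
  then show "-1/2 < b \<bullet> x" "-1/2 < c \<bullet> x"
    using assms equilateral_triple_inner_sum[OF assms(1), of x] by linarith+
qed

lemma equilateral_triple_barycentric:
  assumes t: "equilateral_triple a b c"
  shows "x = ((1 + 2 * (a \<bullet> x)) / 3) *\<^sub>R a + ((1 + 2 * (b \<bullet> x)) / 3) *\<^sub>R b
           + ((1 + 2 * (c \<bullet> x)) / 3) *\<^sub>R c" (is "x = ?y")
proof -
  note ip = equilateral_triple_inner[OF t]
  have s: "a \<bullet> x + b \<bullet> x + c \<bullet> x = 0"
    using equilateral_triple_inner_sum[OF t] .
  have "a \<bullet> ?y = a \<bullet> x" "b \<bullet> ?y = b \<bullet> x"
    using s by (simp_all add: inner_add_right ip inner_commute[of b a] field_simps)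
  then have "a \<bullet> (?y - x) = 0" "b \<bullet> (?y - x) = 0"
    by (simp_all add: inner_diff_right)
  moreover have "(rot90 a \<bullet> b)\<^sup>2 = 3/4"
    using inner_rot90_Lagrange[of a b] ip t by (simp add: equilateral_triple_def power2_eq_square)
  then have "rot90 a \<bullet> b \<noteq> 0"
    by auto
  ultimately show ?thesis
    using eq_0_if_orthogonal_to_transversal_pair by force
qed

lemma convex_hull_equilateral_triple:
  assumes t: "equilateral_triple a b c"
  shows "convex hull {a, b, c} = {x. -1/2 \<le> a \<bullet> x \<and> -1/2 \<le> b \<bullet> x \<and> -1/2 \<le> c \<bullet> x}"
    (is "_ = ?H")
proof
  have "{a, b, c} \<subseteq> ?H"
    using equilateral_triple_inner[OF t] by (auto simp: inner_commute)
  moreover have "convex ?H"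
    by (simp add: Collect_conj_eq convex_Int convex_halfspace_ge)
  ultimately show "convex hull {a, b, c} \<subseteq> ?H"
    by (rule hull_minimal)
  show "?H \<subseteq> convex hull {a, b, c}"
  proof
    fix x assume "x \<in> ?H"
    moreover have "(1 + 2 * (a \<bullet> x)) / 3 + (1 + 2 * (b \<bullet> x)) / 3 + (1 + 2 * (c \<bullet> x)) / 3 = 1"
      using equilateral_triple_inner_sum[OF t, of x] by (simp add: field_simps)
    ultimately show "x \<in> convex hull {a, b, c}"
      unfolding convex_hull_3 using equilateral_triple_barycentric[OF t, of x]
      by (intro CollectI exI[of _ "(1 + 2 * (a \<bullet> x)) / 3"] exI[of _ "(1 + 2 * (b \<bullet> x)) / 3"]
          exI[of _ "(1 + 2 * (c \<bullet> x)) / 3"]) auto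
  qed
qed

lemma equilateral_triple_chord:
  assumes t: "equilateral_triple a b c"
  shows "ball 0 1 \<inter> {x. a \<bullet> x = -1/2} = ball 0 1 \<inter> closed_segment b c"
proof (intro set_eqI iffI)
  fix x assume x: "x \<in> ball 0 1 \<inter> {x. a \<bullet> x = -1/2}"
  then have gt: "-1/2 < b \<bullet> x" "-1/2 < c \<bullet> x"
    using equilateral_triple_inner_gt[OF t] by auto
  define u where "u = (1 + 2 * (c \<bullet> x)) / 3"
  have u': "1 - u = (1 + 2 * (b \<bullet> x)) / 3"
    using equilateral_triple_inner_sum[OF t, of x] x by (simp add: u_def field_simps)
  have "x = ((1 + 2 * (b \<bullet> x)) / 3) *\<^sub>R b + u *\<^sub>R c"
    using equilateral_triple_barycentric[OF t, of x] x by (simp add: u_def)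
  then have "x = (1 - u) *\<^sub>R b + u *\<^sub>R c"
    unfolding u' .
  moreover have "0 \<le> u"
    using gt by (simp add: u_def)
  moreover have "0 < 1 - u"
    unfolding u' using gt by simp
  ultimately have "x \<in> closed_segment b c"
    unfolding in_segment by (intro exI[of _ u]) simp
  then show "x \<in> ball 0 1 \<inter> closed_segment b c"
    using x by simp
next
  fix x assume x: "x \<in> ball 0 1 \<inter> closed_segment b c"
  then obtain u where "x = (1 - u) *\<^sub>R b + u *\<^sub>R c"
    by (auto simp: in_segment)
  then have "a \<bullet> x = (1 - u) * (a \<bullet> b) + u * (a \<bullet> c)"
    by (simp add: inner_add_right)
  also have "\<dots> = -1/2"
    using equilateral_triple_inner[OF t] by (simp add: algebra_simps)
  finally show "x \<in> ball 0 1 \<inter> {x. a \<bullet> x = -1/2}"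
    using x by simp
qed

section \<open>The inscribed-triangle decomposition\<close>

lemma open_segment_sphere_subset_ball:
  fixes b c :: "'a::real_inner"
  assumes "norm b = 1" "norm c = 1"
  shows "open_segment b c \<subseteq> ball 0 1"
proof
  fix x assume "x \<in> open_segment b c"
  then obtain u where u: "0 < u" "u < 1" "x = (1 - u) *\<^sub>R b + u *\<^sub>R c" and "b \<noteq> c"
    by (auto simp: in_segment)
  have bb: "b \<bullet> b = 1" "c \<bullet> c = 1"
    using assms by (simp_all add: norm_eq_1)
  have "0 < (b - c) \<bullet> (b - c)"
    using \<open>b \<noteq> c\<close> by simp
  then have bc: "b \<bullet> c < 1"
    using bb by (simp add: inner_diff_left inner_diff_right inner_commute)
  have "x \<bullet> x = 1 - 2 * u * (1 - u) * (1 - b \<bullet> c)"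
    using bb by (simp add: u(3) inner_commute algebra_simps)
  also have "\<dots> < 1"
    using u bc by simp
  finally show "x \<in> ball 0 1"
    by (simp add: norm_eq_sqrt_inner)
qed

lemma dist_le_diameter_open_segment:
  fixes S :: "'a::euclidean_space set"
  assumes "bounded S" "open_segment b c \<subseteq> S"
  shows "dist b c \<le> diameter S"
proof (cases "b = c")
  case True
  then show ?thesis
    using diameter_ge_0[OF assms(1)] by simp
next
  case False
  then have "b \<in> closure S" "c \<in> closure S"
    using closure_mono[OF assms(2)] by auto
  then have "dist b c \<le> diameter (closure S)"
    using assms(1) by (intro diameter_bounded_bound) auto
  then show ?thesis
    using diameter_closure[OF assms(1)] by simp
qed

lemma dist_le_sqrt3_in_cap:
  fixes a x y :: "'a::real_inner"
  assumes "norm a = 1" "norm x \<le> 1" "norm y \<le> 1" "a \<bullet> x \<le> -1/2" "a \<bullet> y \<le> -1/2"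
  shows "dist x y \<le> sqrt 3"
proof -
  have "1 \<le> - (a \<bullet> (x + y))"
    using assms(4,5) by (simp add: inner_add_right)
  also have "\<dots> \<le> norm (x + y)"
    using norm_cauchy_schwarz[of "-a" "x + y"] assms(1) by simp
  finally have "1 \<le> norm (x + y) ^ 2"
    by simp
  moreover have "norm (x - y) ^ 2 + norm (x + y) ^ 2 = 2 * norm x ^ 2 + 2 * norm y ^ 2"
    by (simp add: power2_norm_eq_inner inner_add_left inner_add_right inner_diff_left inner_diff_right
        inner_commute)
  moreover have "norm x ^ 2 \<le> 1" "norm y ^ 2 \<le> 1"
    using assms(2,3) by (simp_all add: power_le_one)
  ultimately have "norm (x - y) ^ 2 \<le> 3"
    by linarith
  then show ?thesis
    by (simp add: dist_norm real_le_rsqrt)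
qed

lemma open_Int_frontier_Int:
  assumes "open D"
  shows "D \<inter> frontier (D \<inter> A) = D \<inter> frontier A"
proof -
  have "D \<inter> closure A \<subseteq> closure (D \<inter> A)"
    using open_Int_closure_subset[OF assms] by blast
  then show ?thesis
    using closure_mono[of "D \<inter> A" A] assms by (auto simp: frontier_def interior_open)
qed

lemma smooth_curve_linepath: "a \<noteq> b \<Longrightarrow> smooth_curve (linepath a b)"
  unfolding smooth_curve_def
proof (intro conjI ballI)
  show "linepath a b C1_differentiable_on {0..1}"
    unfolding linepath_def
    by (intro C1_differentiable_on_add C1_differentiable_on_scaleR C1_differentiable_on_diff
        C1_differentiable_on_const C1_differentiable_on_ident)
  show "vector_derivative (linepath a b) (at t within {0..1}) \<noteq> 0"
    if "a \<noteq> b" "t \<in> {0..1}" for t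
    using that by (simp add: vector_derivative_linepath_within)
qed

lemma smooth_frontier_by_segments:
  assumes "finite E" "\<forall>(u, v)\<in>E. u \<noteq> v"
    and "D \<inter> frontier P = D \<inter> (\<Union>(u, v)\<in>E. closed_segment u v)"
  shows "\<exists>C. (\<forall>g\<in>C. smooth_curve g) \<and>
           (\<forall>x\<in>D. \<exists>U. open U \<and> x \<in> U \<and> finite {g\<in>C. path_image g \<inter> U \<noteq> {}}) \<and>
           D \<inter> frontier P = D \<inter> \<Union>(path_image ` C)"
proof (intro exI[of _ "(\<lambda>(u, v). linepath u v) ` E"] conjI ballI)
  show "smooth_curve g" if "g \<in> (\<lambda>(u, v). linepath u v) ` E" for g
    using that assms(2) smooth_curve_linepath by auto
  show "\<exists>U. open U \<and> x \<in> U \<and> finite {g \<in> (\<lambda>(u, v). linepath u v) ` E. path_image g \<inter> U \<noteq> {}}"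
    for x
    using assms(1) by (intro exI[of _ UNIV]) auto
  show "D \<inter> frontier P = D \<inter> \<Union>(path_image ` (\<lambda>(u, v). linepath u v) ` E)"
    using assms(3) by auto
qed

definition disk_cap :: "real^2 \<Rightarrow> (real^2) set" where
  "disk_cap v = ball 0 1 \<inter> {x. v \<bullet> x \<le> -1/2}"

definition inscribed_triangle_pieces :: "real^2 \<Rightarrow> real^2 \<Rightarrow> real^2 \<Rightarrow> (real^2) set set" where
  "inscribed_triangle_pieces a b c = insert (ball 0 1 \<inter> convex hull {a, b, c}) (disk_cap ` {a, b, c})"

lemma triangle_decomposition_eq:
  "\<exists>a b c. equilateral_triple a b c \<and> triangle_decomposition = inscribed_triangle_pieces a b c"
proof (intro exI conjI)
  let ?a = "vector [1, 0] :: real^2"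
  let ?b = "vector [-1/2, sqrt 3 / 2] :: real^2"
  let ?c = "vector [-1/2, - sqrt 3 / 2] :: real^2"
  show "equilateral_triple ?a ?b ?c"
    by (simp add: equilateral_triple_def norm_vec_def L2_set_def sum_2 power_divide vec_eq_iff forall_2)
  have "unit_disk \<inter> (cball 0 1 \<inter> {x. x \<bullet> - v \<ge> 1/2}) = disk_cap v" for v :: "real^2"
    by (auto simp: unit_disk_def disk_cap_def inner_commute)
  then show "triangle_decomposition = inscribed_triangle_pieces ?a ?b ?c"
    by (simp add: triangle_decomposition_def inscribed_triangle_pieces_def tri_vertices_def
        unit_disk_def)
qed

lemma disk_caps_disjoint:
  assumes "equilateral_triple a b c" "u \<in> {a, b, c}" "v \<in> {a, b, c}" "u \<noteq> v"
  shows "disk_cap u \<inter> disk_cap v = {}"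
proof -
  obtain w where "equilateral_triple u v w"
    using equilateral_triple_permute[OF assms] by blast
  then show ?thesis
    using equilateral_triple_inner_gt(1) by (fastforce simp: disk_cap_def)
qed

lemma inscribed_triangle_at_most_two_meet:
  assumes t: "equilateral_triple a b c"
  shows "at_most_two_meet unit_disk (inscribed_triangle_pieces a b c)"
proof -
  have False if "x \<in> S" "x \<in> S'" "S \<noteq> S'" "S \<in> disk_cap ` {a, b, c}" "S' \<in> disk_cap ` {a, b, c}"
    for x S S'
    using that disk_caps_disjoint[OF t] by blast
  then show ?thesis
    unfolding at_most_two_meet_def inscribed_triangle_pieces_def by blast
qed

lemma interior_inscribed_triangle_pieces_disjoint:
  assumes t: "equilateral_triple a b c" and P: "P \<in> inscribed_triangle_pieces a b c"
    and Q: "Q \<in> inscribed_triangle_pieces a b c" and "P \<noteq> Q"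
  shows "interior P \<inter> interior Q = {}"
proof -
  let ?T = "ball 0 1 \<inter> convex hull {a, b, c}"
  have T_cap: "interior ?T \<inter> interior (disk_cap v) = {}" if v: "v \<in> {a, b, c}" for v
  proof -
    have "v \<noteq> 0"
      using v t by (auto simp: equilateral_triple_def)
    have "interior ?T \<subseteq> interior {x. -1/2 \<le> v \<bullet> x}"
      using v by (intro interior_mono) (auto simp: convex_hull_equilateral_triple[OF t])
    also have "\<dots> = {x. -1/2 < v \<bullet> x}"
      using \<open>v \<noteq> 0\<close> by simp
    finally have "interior ?T \<subseteq> {x. -1/2 < v \<bullet> x}" .
    moreover have "interior (disk_cap v) \<subseteq> interior {x. v \<bullet> x \<le> -1/2}"
      by (intro interior_mono) (auto simp: disk_cap_def)
    then have "interior (disk_cap v) \<subseteq> {x. v \<bullet> x < -1/2}"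
      using \<open>v \<noteq> 0\<close> by simp
    ultimately show ?thesis
      by force
  qed
  have cap_cap: "interior (disk_cap u) \<inter> interior (disk_cap v) = {}"
    if "u \<in> {a, b, c}" "v \<in> {a, b, c}" "disk_cap u \<noteq> disk_cap v" for u v
    using disk_caps_disjoint[OF t that(1,2)] that(3) interior_subset by blast
  have cap_any: "interior S \<inter> interior S' = {}"
    if "S \<in> disk_cap ` {a, b, c}" "S' \<in> inscribed_triangle_pieces a b c" "S \<noteq> S'" for S S'
    using that T_cap cap_cap unfolding inscribed_triangle_pieces_def by blast
  show ?thesis
  proof (cases "P = ?T")
    case True
    then have "Q \<in> disk_cap ` {a, b, c}"
      using Q \<open>P \<noteq> Q\<close> by (auto simp: inscribed_triangle_pieces_def)
    then show ?thesis
      using cap_any[of Q P] P \<open>P \<noteq> Q\<close> by blast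
  next
    case False
    then show ?thesis
      using cap_any[of P Q] P Q \<open>P \<noteq> Q\<close> by (auto simp: inscribed_triangle_pieces_def)
  qed
qed

lemma Union_inscribed_triangle_pieces:
  assumes t: "equilateral_triple a b c"
  shows "\<Union>(inscribed_triangle_pieces a b c) = ball 0 1"
proof -
  have "x \<in> \<Union>(inscribed_triangle_pieces a b c)" if x: "x \<in> ball 0 1" for x
  proof (cases "-1/2 \<le> a \<bullet> x \<and> -1/2 \<le> b \<bullet> x \<and> -1/2 \<le> c \<bullet> x")
    case True
    then have "x \<in> ball 0 1 \<inter> convex hull {a, b, c}"
      using x convex_hull_equilateral_triple[OF t] by simp
    then show ?thesis
      by (auto simp: inscribed_triangle_pieces_def)
  next
    case False
    then have "\<exists>v\<in>{a, b, c}. v \<bullet> x \<le> -1/2"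
      by auto
    then obtain v where "v \<in> {a, b, c}" "x \<in> disk_cap v"
      using x by (auto simp: disk_cap_def)
    then show ?thesis
      by (auto simp: inscribed_triangle_pieces_def)
  qed
  then have "ball 0 1 \<subseteq> \<Union>(inscribed_triangle_pieces a b c)"
    by blast
  moreover have "\<Union>(inscribed_triangle_pieces a b c) \<subseteq> ball 0 1"
    by (auto simp: inscribed_triangle_pieces_def disk_cap_def)
  ultimately show ?thesis
    by blast
qed

lemma inscribed_triangle_decomposition:
  assumes t: "equilateral_triple a b c"
  shows "decomposition unit_disk (inscribed_triangle_pieces a b c)"
  unfolding decomposition_def unit_disk_def
proof (intro conjI ballI impI Union_inscribed_triangle_pieces[OF t])
  fix P assume P: "P \<in> inscribed_triangle_pieces a b c"
  then consider "P = ball 0 1 \<inter> convex hull {a, b, c}" | u where "P = disk_cap u"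
    by (auto simp: inscribed_triangle_pieces_def)
  then show "closedin (top_of_set (ball 0 1)) P"
    unfolding disk_cap_def
    by cases (simp_all add: closedin_closed_Int closed_halfspace_le compact_imp_closed compact_convex_hull)
  show "interior P \<inter> interior Q = {}" if "Q \<in> inscribed_triangle_pieces a b c" "P \<noteq> Q" for Q
    using interior_inscribed_triangle_pieces_disjoint[OF t P that] .
next
  show "\<exists>U. open U \<and> x \<in> U \<and> finite {P \<in> inscribed_triangle_pieces a b c. P \<inter> U \<noteq> {}}" for x
    by (intro exI[of _ UNIV]) (simp add: inscribed_triangle_pieces_def)
qed

lemma frontier_inscribed_triangle:
  assumes t: "equilateral_triple a b c"
  shows "ball 0 1 \<inter> frontier (ball 0 1 \<inter> convex hull {a, b, c})
    = ball 0 1 \<inter> (closed_segment b c \<union> closed_segment c a \<union> closed_segment a b)"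
proof -
  have t': "equilateral_triple b c a" "equilateral_triple c a b"
    using t equilateral_triple_rotate by blast+
  have hull: "convex hull {a, b, c} = {x. -1/2 \<le> a \<bullet> x \<and> -1/2 \<le> b \<bullet> x \<and> -1/2 \<le> c \<bullet> x}"
    by (rule convex_hull_equilateral_triple[OF t])
  have "a \<noteq> 0" "b \<noteq> 0" "c \<noteq> 0"
    using t by (auto simp: equilateral_triple_def)
  with hull have "interior (convex hull {a, b, c}) = {x. -1/2 < a \<bullet> x \<and> -1/2 < b \<bullet> x \<and> -1/2 < c \<bullet> x}"
    by (simp add: Collect_conj_eq)
  moreover have "closure (convex hull {a, b, c}) = convex hull {a, b, c}"
    by (simp add: compact_imp_closed compact_convex_hull)
  ultimately have "ball 0 1 \<inter> frontier (convex hull {a, b, c})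
      = ball 0 1 \<inter> ({x. a \<bullet> x = -1/2} \<union> {x. b \<bullet> x = -1/2} \<union> {x. c \<bullet> x = -1/2})"
    unfolding frontier_def hull
    using equilateral_triple_inner_gt[OF t] equilateral_triple_inner_gt[OF t'(1)]
      equilateral_triple_inner_gt[OF t'(2)] by fastforce
  also have "\<dots> = ball 0 1 \<inter> (closed_segment b c \<union> closed_segment c a \<union> closed_segment a b)"
    using equilateral_triple_chord[OF t] equilateral_triple_chord[OF t'(1)]
      equilateral_triple_chord[OF t'(2)] by blast
  finally show ?thesis
    by (simp add: open_Int_frontier_Int)
qed

lemma frontier_disk_cap:
  assumes t: "equilateral_triple u v w"
  shows "ball 0 1 \<inter> frontier (disk_cap u) = ball 0 1 \<inter> closed_segment v w"
proof -
  have "u \<noteq> 0"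
    using t by (auto simp: equilateral_triple_def)
  then have "ball 0 1 \<inter> frontier (disk_cap u) = ball 0 1 \<inter> {x. u \<bullet> x = -1/2}"
    by (simp add: disk_cap_def open_Int_frontier_Int frontier_halfspace_le)
  then show ?thesis
    using equilateral_triple_chord[OF t] by simp
qed

lemma inscribed_triangle_smooth_decomposition:
  assumes t: "equilateral_triple a b c"
  shows "smooth_decomposition unit_disk (inscribed_triangle_pieces a b c)"
  unfolding smooth_decomposition_def
proof (intro conjI ballI inscribed_triangle_decomposition[OF t])
  fix P assume "P \<in> inscribed_triangle_pieces a b c"
  then consider "P = ball 0 1 \<inter> convex hull {a, b, c}" | u where "u \<in> {a, b, c}" "P = disk_cap u"
    by (auto simp: inscribed_triangle_pieces_def)
  then obtain E where "finite E" "\<forall>(u, v)\<in>E. u \<noteq> v"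
    "ball 0 1 \<inter> frontier P = ball 0 1 \<inter> (\<Union>(u, v)\<in>E. closed_segment u v)"
  proof cases
    case 1
    have "equilateral_triple b c a" "equilateral_triple c a b"
      using t equilateral_triple_rotate by blast+
    then have "a \<noteq> b" "b \<noteq> c" "c \<noteq> a"
      using t equilateral_triple_dist by fastforce+
    then show ?thesis
      using that[of "{(b, c), (c, a), (a, b)}"] frontier_inscribed_triangle[OF t] 1 by auto
  next
    case 2
    obtain v w where vw: "equilateral_triple u v w"
      using equilateral_triple_vertex[OF t 2(1)] by blast
    then have "v \<noteq> w"
      using equilateral_triple_dist[OF equilateral_triple_rotate[OF vw]] by auto
    then show ?thesis
      using that[of "{(v, w)}"] frontier_disk_cap[OF vw] 2(2) by auto
  qed
  then show "\<exists>C. (\<forall>g\<in>C. smooth_curve g) \<and>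
      (\<forall>x\<in>unit_disk. \<exists>U. open U \<and> x \<in> U \<and> finite {g \<in> C. path_image g \<inter> U \<noteq> {}}) \<and>
      unit_disk \<inter> frontier P = unit_disk \<inter> \<Union>(path_image ` C)"
    unfolding unit_disk_def by (rule smooth_frontier_by_segments)
qed

lemma diameter_inscribed_triangle:
  assumes t: "equilateral_triple a b c"
  shows "diameter (ball 0 1 \<inter> convex hull {a, b, c}) = sqrt 3" (is "diameter ?T = _")
proof (rule antisym)
  have "norm (x - y) \<le> sqrt 3" if "x \<in> ?T" "y \<in> ?T" for x y
  proof -
    have "x \<in> convex hull {a, b, c}" "y \<in> convex hull {a, b, c}"
      using that by auto
    then obtain u v where uv: "u \<in> {a, b, c}" "v \<in> {a, b, c}" "norm (x - y) \<le> norm (u - v)"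
      using simplex_extremal_le_exists[of "{a, b, c}" x y] by blast
    have "norm (u - v) \<le> sqrt 3"
    proof (cases "u = v")
      case False
      then obtain w where "equilateral_triple u v w"
        using equilateral_triple_permute[OF t uv(1,2)] by blast
      then show ?thesis
        using equilateral_triple_dist by (simp add: dist_norm)
    qed simp
    then show ?thesis
      using uv(3) by linarith
  qed
  then show "diameter ?T \<le> sqrt 3"
    by (intro diameter_le) auto
  have "open_segment b c \<subseteq> closed_segment b c"
    by (rule segment_open_subset_closed)
  also have "\<dots> \<subseteq> convex hull {a, b, c}"
    by (intro closed_segment_subset_convex_hull hull_inc) auto
  finally have "open_segment b c \<subseteq> ?T"
    using open_segment_sphere_subset_ball[of b c] t by (auto simp: equilateral_triple_def)
  then have "dist b c \<le> diameter ?T"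
    by (intro dist_le_diameter_open_segment) auto
  then show "sqrt 3 \<le> diameter ?T"
    using equilateral_triple_dist[OF equilateral_triple_rotate[OF t]] by simp
qed

lemma diameter_disk_cap:
  assumes t: "equilateral_triple u v w"
  shows "diameter (disk_cap u) = sqrt 3"
proof (rule antisym)
  have "norm u = 1"
    using t by (simp add: equilateral_triple_def)
  then have "dist x y \<le> sqrt 3" if "x \<in> disk_cap u" "y \<in> disk_cap u" for x y
    using that dist_le_sqrt3_in_cap[of u x y] by (auto simp: disk_cap_def)
  then show "diameter (disk_cap u) \<le> sqrt 3"
    by (intro diameter_le) (auto simp: dist_norm)
  have "open_segment v w \<subseteq> ball 0 1 \<inter> closed_segment v w"
    using open_segment_sphere_subset_ball[of v w] t segment_open_subset_closed
    by (auto simp: equilateral_triple_def)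
  also have "\<dots> = ball 0 1 \<inter> {x. u \<bullet> x = -1/2}"
    using equilateral_triple_chord[OF t] by simp
  finally have "open_segment v w \<subseteq> disk_cap u"
    by (auto simp: disk_cap_def)
  then have "dist v w \<le> diameter (disk_cap u)"
    by (intro dist_le_diameter_open_segment) (auto simp: disk_cap_def intro: bounded_subset[OF bounded_ball])
  then show "sqrt 3 \<le> diameter (disk_cap u)"
    using equilateral_triple_dist[OF equilateral_triple_rotate[OF t]] by simp
qed

lemma inscribed_triangle_diameter:
  assumes t: "equilateral_triple a b c" and P: "P \<in> inscribed_triangle_pieces a b c"
  shows "diameter P = sqrt 3"
  using P diameter_inscribed_triangle[OF t] diameter_disk_cap equilateral_triple_vertex[OF t]
  by (fastforce simp: inscribed_triangle_pieces_def)

section \<open>Covers of a disc without triple points\<close>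

lemma at_most_two_meetD:
  assumes "at_most_two_meet D \<P>" "x \<in> D" "P \<in> \<P>" "Q \<in> \<P>" "R \<in> \<P>" "x \<in> P" "x \<in> Q" "x \<in> R"
  shows "P = Q \<or> P = R \<or> Q = R"
  using assms unfolding at_most_two_meet_def by blast

lemma at_most_two_meet_mono:
  "at_most_two_meet D \<P> \<Longrightarrow> D' \<subseteq> D \<Longrightarrow> \<P>' \<subseteq> \<P> \<Longrightarrow> at_most_two_meet D' \<P>'"
  unfolding at_most_two_meet_def by blast

lemma at_most_two_meet_refine:
  assumes "at_most_two_meet D \<P>" "\<forall>P\<in>\<P>. \<forall>X\<in>\<H> P. X \<subseteq> P" "\<forall>P\<in>\<P>. disjoint (\<H> P)"
  shows "at_most_two_meet D (\<Union>P\<in>\<P>. \<H> P)"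
  unfolding at_most_two_meet_def
proof clarify
  fix x P Q R X Y Z
  assume x: "x \<in> D" "X \<in> \<H> P" "Y \<in> \<H> Q" "Z \<in> \<H> R" "P \<in> \<P>" "Q \<in> \<P>" "R \<in> \<P>"
    "X \<noteq> Y" "X \<noteq> Z" "Y \<noteq> Z" "x \<in> X" "x \<in> Y" "x \<in> Z"
  have same: "A = B" if "S \<in> \<P>" "A \<in> \<H> S" "B \<in> \<H> S" "x \<in> A" "x \<in> B" for S A B
    using assms(3) that unfolding disjoint_def by blast
  have "P \<noteq> Q" "P \<noteq> R" "Q \<noteq> R"
    using same[of P X Y] same[of P X Z] same[of Q Y Z] x by auto
  moreover have "x \<in> P" "x \<in> Q" "x \<in> R"
    using x assms(2) by blast+
  ultimately show False
    using at_most_two_meetD[OF assms(1) x(1) x(5-7)] by blast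
qed

lemma open_halfspace_directions:
  fixes K :: "'a::euclidean_space set"
  assumes "compact K"
  shows "open {c. \<forall>x\<in>K. x \<bullet> c < 0}"
proof -
  have "closed {c. \<exists>x. x \<in> K \<and> (x, c) \<in> {p. 0 \<le> fst p \<bullet> snd p}}"
    using assms by (intro closed_compact_projection closed_Collect_le continuous_intros)
  moreover have "{c. \<forall>x\<in>K. x \<bullet> c < 0} = - {c. \<exists>x. x \<in> K \<and> (x, c) \<in> {p. 0 \<le> fst p \<bullet> snd p}}"
    by (auto simp: not_le)
  ultimately show ?thesis
    by (simp add: open_Compl)
qed

lemma interior_Union_closed_empty_interior:
  assumes "finite \<F>" "\<forall>S\<in>\<F>. closed S \<and> interior S = {}"
  shows "interior (\<Union>\<F>) = {}"
  using assms
proof (induction \<F> rule: finite_induct)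
  case (insert S \<F>)
  then show ?case
    using interior_closed_Un_empty_interior[of S "\<Union>\<F>"] by simp
qed simp

lemma open_set_avoids_finitely_many_lines:
  assumes "open U" "U \<noteq> {}" "finite V" "0 \<notin> V"
  shows "\<exists>q\<in>U. q \<noteq> 0 \<and> (\<forall>v\<in>V. rot90 q \<bullet> v \<noteq> 0)"
proof -
  define \<L> where "\<L> = insert {0} ((\<lambda>v. {q. rot90 v \<bullet> q = 0}) ` V)"
  have "closed S \<and> interior S = {}" if S: "S \<in> \<L>" for S
  proof -
    consider "S = {0}" | v where "v \<in> V" "S = {q. rot90 v \<bullet> q = 0}"
      using S by (auto simp: \<L>_def)
    then show ?thesis
    proof cases
      case 2
      then have "rot90 v \<noteq> 0"
        using assms(4) by (metis norm_eq_zero norm_rot90)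
      then show ?thesis
        using 2 by (simp add: closed_hyperplane)
    qed simp
  qed
  then have "interior (\<Union>\<L>) = {}"
    using assms(3) by (intro interior_Union_closed_empty_interior) (auto simp: \<L>_def)
  then have "\<not> U \<subseteq> \<Union>\<L>"
    using assms(1,2) interior_maximal by blast
  then obtain q where "q \<in> U" "q \<notin> \<Union>\<L>"
    by blast
  moreover have "rot90 q \<bullet> v \<noteq> 0" if "v \<in> V" for v
    using \<open>q \<notin> \<Union>\<L>\<close> that inner_rot90_skew[of q v] by (auto simp: \<L>_def)
  ultimately show ?thesis
    by (auto simp: \<L>_def)
qed

lemma choice_pairwise_transversal:
  assumes "finite I" "\<forall>i\<in>I. open (G i) \<and> G i \<noteq> {}"
  shows "\<exists>c. \<forall>i\<in>I. c i \<in> G i \<and> c i \<noteq> 0 \<and> (\<forall>j\<in>I. j \<noteq> i \<longrightarrow> rot90 (c i) \<bullet> c j \<noteq> 0)"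
  using assms
proof (induction I rule: finite_induct)
  case (insert i I)
  then obtain c where c: "\<forall>j\<in>I. c j \<in> G j \<and> c j \<noteq> 0 \<and> (\<forall>k\<in>I. k \<noteq> j \<longrightarrow> rot90 (c j) \<bullet> c k \<noteq> 0)"
    by auto
  have "0 \<notin> c ` I" "finite (c ` I)" "open (G i)" "G i \<noteq> {}"
    using c insert by auto
  then obtain q where q: "q \<in> G i" "q \<noteq> 0" "\<forall>j\<in>I. rot90 q \<bullet> c j \<noteq> 0"
    using open_set_avoids_finitely_many_lines[of "G i" "c ` I"] by auto
  moreover have "\<forall>j\<in>I. rot90 (c j) \<bullet> q \<noteq> 0"
    using q(3) inner_rot90_skew[of q] by auto
  ultimately show ?case
    using c insert.hyps(2) by (intro exI[of _ "c(i := q)"]) auto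
qed simp

lemma eventually_infdist_gt_closed:
  fixes X F :: "'a::heine_borel set"
  assumes "compact X" "X \<noteq> {}" "closed F" "X \<inter> F = {}"
  shows "\<forall>\<^sub>F \<epsilon> in at_right 0. \<forall>y\<in>F. \<epsilon> < infdist y X"
proof -
  obtain \<delta> where "0 < \<delta>" and \<delta>: "\<forall>x\<in>X. \<forall>y\<in>F. \<delta> \<le> dist x y"
    using separate_compact_closed[OF assms(1,3,4)] by blast
  have "\<delta> \<le> infdist y X" if "y \<in> F" for y
  proof -
    obtain x where "x \<in> X" "infdist y X = dist y x"
      using infdist_attains_inf[OF compact_imp_closed[OF assms(1)] assms(2)] by blast
    then show ?thesis
      using \<delta> that by (simp add: dist_commute)
  qed
  then show ?thesis
    unfolding eventually_at_right_field using \<open>0 < \<delta>\<close> by (intro exI[of _ \<delta>]) fastforce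
qed

lemma eventually_no_triple_point_near:
  assumes K: "compact K" and fin: "finite XX" and XX: "\<forall>X\<in>XX. closed X \<and> X \<noteq> {}"
    and two: "at_most_two_meet K XX"
  shows "\<forall>\<^sub>F \<epsilon> in at_right 0. \<forall>X\<in>XX. \<forall>Y\<in>XX. \<forall>Z\<in>XX. X \<noteq> Y \<and> X \<noteq> Z \<and> Y \<noteq> Z \<longrightarrow>
           (\<forall>x\<in>K. \<epsilon> \<le> max (infdist x X) (max (infdist x Y) (infdist x Z)))"
proof -
  have triple: "\<forall>\<^sub>F \<epsilon> in at_right 0. X \<noteq> Y \<and> X \<noteq> Z \<and> Y \<noteq> Z \<longrightarrow>
      (\<forall>x\<in>K. \<epsilon> \<le> max (infdist x X) (max (infdist x Y) (infdist x Z)))"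
    if XYZ: "X \<in> XX" "Y \<in> XX" "Z \<in> XX" for X Y Z
  proof (cases "X \<noteq> Y \<and> X \<noteq> Z \<and> Y \<noteq> Z \<and> K \<noteq> {}")
    case True
    define g where "g x = max (infdist x X) (max (infdist x Y) (infdist x Z))" for x
    have "continuous_on K g"
      unfolding g_def by (intro continuous_intros)
    then obtain x0 where x0: "x0 \<in> K" "\<forall>x\<in>K. g x0 \<le> g x"
      using continuous_attains_inf[OF K] True by blast
    have "0 < g x0"
    proof (rule ccontr)
      assume "\<not> 0 < g x0"
      then have "infdist x0 X \<le> 0" "infdist x0 Y \<le> 0" "infdist x0 Z \<le> 0"
        by (simp_all add: g_def)
      then have "infdist x0 X = 0" "infdist x0 Y = 0" "infdist x0 Z = 0"
        by (simp_all add: antisym infdist_nonneg)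
      then have "x0 \<in> X" "x0 \<in> Y" "x0 \<in> Z"
        using XX XYZ by (simp_all add: in_closed_iff_infdist_zero)
      then show False
        using at_most_two_meetD[OF two x0(1) XYZ] True by blast
    qed
    then show ?thesis
      unfolding eventually_at_right_field g_def[symmetric] using x0(2)
      by (intro exI[of _ "g x0"]) auto
  qed auto
  show ?thesis
    by (intro eventually_ball_finite[OF fin] ballI triple)
qed

lemma sum_two_supported_transversal_nonzero:
  fixes c :: "'i \<Rightarrow> real^2"
  assumes fin: "finite I" and i0: "i0 \<in> I" "0 < w i0"
    and two: "\<forall>i\<in>I. \<forall>j\<in>I. \<forall>k\<in>I. i \<noteq> j \<and> i \<noteq> k \<and> j \<noteq> k \<longrightarrow> w i = 0 \<or> w j = 0 \<or> w k = 0"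
    and c: "\<forall>i\<in>I. c i \<noteq> 0" "\<forall>i\<in>I. \<forall>j\<in>I. i \<noteq> j \<longrightarrow> rot90 (c i) \<bullet> c j \<noteq> 0"
  shows "(\<Sum>i\<in>I. w i *\<^sub>R c i) \<noteq> 0"
proof (cases "\<exists>j\<in>I. j \<noteq> i0 \<and> w j \<noteq> 0")
  case True
  then obtain j where j: "j \<in> I" "j \<noteq> i0" "w j \<noteq> 0"
    by blast
  have "w k = 0" if "k \<in> I - {i0, j}" for k
    using two[rule_format, of i0 j k] i0 j that by auto
  then have "(\<Sum>i\<in>I. w i *\<^sub>R c i) = (\<Sum>i\<in>{i0, j}. w i *\<^sub>R c i)"
    using i0 j by (intro sum.mono_neutral_right[OF fin]) auto
  then have "rot90 (c i0) \<bullet> (\<Sum>i\<in>I. w i *\<^sub>R c i) = w j * (rot90 (c i0) \<bullet> c j)"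
    using j by (simp add: inner_add_right)
  then show ?thesis
    using j i0 c by auto
next
  case False
  then have "(\<Sum>i\<in>I. w i *\<^sub>R c i) = w i0 *\<^sub>R c i0"
    using i0 by (intro trans[OF sum.mono_neutral_right[OF fin, of "{i0}"]]) auto
  then show ?thesis
    using i0 c by simp
qed

lemma nonvanishing_field_points_outward:
  fixes y :: "'a::euclidean_space \<Rightarrow> 'a"
  assumes "0 < r" "continuous_on (cball 0 r) y" "\<forall>x\<in>cball 0 r. y x \<noteq> 0"
  shows "\<exists>x\<in>sphere 0 r. 0 < x \<bullet> y x"
proof -
  define f where "f x = (r / norm (y x)) *\<^sub>R y x" for x
  have "continuous_on (cball 0 r) f"
    unfolding f_def using assms(2,3) by (intro continuous_intros) auto
  moreover have "f \<in> cball 0 r \<rightarrow> cball 0 r"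
    using assms(1,3) by (auto simp: f_def)
  ultimately obtain x where x: "x \<in> cball 0 r" "f x = x"
    using brouwer_ball[OF assms(1)] by blast
  have "y x \<noteq> 0"
    using assms(3) x(1) by blast
  then have "norm (f x) = r" "f x \<bullet> y x = r * norm (y x)"
    using assms(1) by (simp_all add: f_def dot_square_norm power2_eq_square)
  then have "norm x = r" "x \<bullet> y x = r * norm (y x)"
    using x(2) by simp_all
  moreover have "0 < r * norm (y x)"
    using assms(1) \<open>y x \<noteq> 0\<close> by simp
  ultimately show ?thesis
    using assms x(1) by (intro bexI[of _ x]) auto
qed

lemma cover_directions_and_margin:
  fixes XX :: "(real^2) set set"
  assumes fin: "finite XX" and cpt: "\<forall>X\<in>XX. compact X" and ne: "{} \<notin> XX"
    and half: "\<forall>X\<in>XX. \<exists>c. \<forall>x\<in>X \<inter> sphere 0 r. x \<bullet> c < 0"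
    and two: "at_most_two_meet (cball 0 r) XX"
  obtains c \<epsilon> where "0 < \<epsilon>"
    and "\<forall>X\<in>XX. c X \<noteq> 0 \<and> (\<forall>Y\<in>XX. Y \<noteq> X \<longrightarrow> rot90 (c X) \<bullet> c Y \<noteq> 0)"
    and "\<forall>X\<in>XX. \<forall>y\<in>sphere 0 r \<inter> {y. 0 \<le> c X \<bullet> y}. \<epsilon> < infdist y X"
    and "\<forall>X\<in>XX. \<forall>Y\<in>XX. \<forall>Z\<in>XX. X \<noteq> Y \<and> X \<noteq> Z \<and> Y \<noteq> Z \<longrightarrow>
           (\<forall>x\<in>cball 0 r. \<epsilon> \<le> max (infdist x X) (max (infdist x Y) (infdist x Z)))"
proof -
  define G where "G X = {c. \<forall>x\<in>X \<inter> sphere 0 r. x \<bullet> c < 0}" for X :: "(real^2) set"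
  have "\<forall>X\<in>XX. open (G X) \<and> G X \<noteq> {}"
  proof (intro ballI conjI)
    fix X assume "X \<in> XX"
    then show "open (G X)"
      unfolding G_def using cpt by (intro open_halfspace_directions compact_Int_closed) auto
    show "G X \<noteq> {}"
      using half \<open>X \<in> XX\<close> unfolding G_def by blast
  qed
  then obtain c where c: "\<forall>X\<in>XX. c X \<in> G X \<and> c X \<noteq> 0 \<and> (\<forall>Y\<in>XX. Y \<noteq> X \<longrightarrow> rot90 (c X) \<bullet> c Y \<noteq> 0)"
    using choice_pairwise_transversal[OF fin, of G] by blast
  have "\<forall>X\<in>XX. \<forall>\<^sub>F \<epsilon> in at_right 0. \<forall>y\<in>sphere 0 r \<inter> {y. 0 \<le> c X \<bullet> y}. \<epsilon> < infdist y X"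
    using cpt ne c by (intro ballI eventually_infdist_gt_closed closed_Int closed_halfspace_ge)
      (auto simp: G_def inner_commute not_less[symmetric])
  then have near: "\<forall>\<^sub>F \<epsilon> in at_right 0. \<forall>X\<in>XX. \<forall>y\<in>sphere 0 r \<inter> {y. 0 \<le> c X \<bullet> y}. \<epsilon> < infdist y X"
    (is "\<forall>\<^sub>F \<epsilon> in _. ?near \<epsilon>")
    by (rule eventually_ball_finite[OF fin])
  have sparse: "\<forall>\<^sub>F \<epsilon> in at_right 0. \<forall>X\<in>XX. \<forall>Y\<in>XX. \<forall>Z\<in>XX. X \<noteq> Y \<and> X \<noteq> Z \<and> Y \<noteq> Z \<longrightarrow>
      (\<forall>x\<in>cball 0 r. \<epsilon> \<le> max (infdist x X) (max (infdist x Y) (infdist x Z)))"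
    (is "\<forall>\<^sub>F \<epsilon> in _. ?sparse \<epsilon>")
    using cpt ne compact_imp_closed by (intro eventually_no_triple_point_near[OF compact_cball fin _ two]) auto
  from eventually_happens'[OF trivial_limit_at_right_real
      eventually_conj[OF eventually_at_right_less eventually_conj[OF near sparse]]]
  obtain \<epsilon> where "0 < \<epsilon> \<and> ?near \<epsilon> \<and> ?sparse \<epsilon>" ..
  then show ?thesis
    using c by (intro that[of \<epsilon> c]) simp_all
qed

lemma cball_cover_has_triple_point:
  fixes XX :: "(real^2) set set"
  assumes r: "0 < r" and fin: "finite XX" and cpt: "\<forall>X\<in>XX. compact X" and ne: "{} \<notin> XX"
    and cov: "cball 0 r \<subseteq> \<Union>XX" and half: "\<forall>X\<in>XX. \<exists>c. \<forall>x\<in>X \<inter> sphere 0 r. x \<bullet> c < 0"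
  shows "\<not> at_most_two_meet (cball 0 r) XX"
proof
  assume two: "at_most_two_meet (cball 0 r) XX"
  obtain c \<epsilon> where \<epsilon>: "0 < \<epsilon>"
    and c: "\<forall>X\<in>XX. c X \<noteq> 0 \<and> (\<forall>Y\<in>XX. Y \<noteq> X \<longrightarrow> rot90 (c X) \<bullet> c Y \<noteq> 0)"
    and near: "\<forall>X\<in>XX. \<forall>y\<in>sphere 0 r \<inter> {y. 0 \<le> c X \<bullet> y}. \<epsilon> < infdist y X"
    and sparse: "\<forall>X\<in>XX. \<forall>Y\<in>XX. \<forall>Z\<in>XX. X \<noteq> Y \<and> X \<noteq> Z \<and> Y \<noteq> Z \<longrightarrow>
         (\<forall>x\<in>cball 0 r. \<epsilon> \<le> max (infdist x X) (max (infdist x Y) (infdist x Z)))"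
    by (rule cover_directions_and_margin[OF fin cpt ne half two])
  define w where "w X x = max 0 (\<epsilon> - infdist x X)" for X :: "(real^2) set" and x
  define y where "y x = (\<Sum>X\<in>XX. w X x *\<^sub>R c X)" for x
  have "continuous_on (cball 0 r) y"
    unfolding y_def w_def by (intro continuous_intros)
  moreover have "y x \<noteq> 0" if x: "x \<in> cball 0 r" for x
  proof -
    obtain X0 where "X0 \<in> XX" "x \<in> X0"
      using cov x by blast
    then have "0 < w X0 x"
      using \<epsilon> by (simp add: w_def)
    moreover have "w X x = 0 \<or> w Y x = 0 \<or> w Z x = 0"
      if "X \<in> XX" "Y \<in> XX" "Z \<in> XX" "X \<noteq> Y \<and> X \<noteq> Z \<and> Y \<noteq> Z" for X Y Z
      using sparse that x by (fastforce simp: w_def)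
    ultimately show ?thesis
      unfolding y_def using \<open>X0 \<in> XX\<close> c
      by (intro sum_two_supported_transversal_nonzero[OF fin]) (auto simp: w_def)
  qed
  ultimately obtain x where x: "x \<in> sphere 0 r" "0 < x \<bullet> y x"
    using nonvanishing_field_points_outward[OF r] by blast
  have "w X x * (x \<bullet> c X) \<le> 0" if "X \<in> XX" for X
  proof (cases "0 < w X x")
    case True
    then have "infdist x X < \<epsilon>"
      by (simp add: w_def)
    then have "x \<bullet> c X < 0"
      using near that x(1) by (force simp: inner_commute)
    then show ?thesis
      using True by (simp add: mult_nonneg_nonpos)
  qed (simp add: w_def)
  then have "x \<bullet> y x \<le> 0"
    by (simp add: y_def inner_sum_right sum_nonpos)
  with x(2) show False
    by simp
qed

section \<open>Cutting small sets into pieces with half-plane traces\<close>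

lemma sphere_convex_combination_zero_bound:
  fixes s :: "'a::real_inner set"
  assumes s: "finite s" "s \<subseteq> sphere 0 r" and M: "\<forall>x\<in>s. \<forall>y\<in>s. dist x y \<le> M"
    and u: "\<forall>x\<in>s. 0 \<le> u x" "sum u s = 1" "(\<Sum>x\<in>s. u x *\<^sub>R x) = 0"
  shows "r\<^sup>2 - M\<^sup>2 / 2 + M\<^sup>2 / 2 * (\<Sum>x\<in>s. (u x)\<^sup>2) \<le> 0"
proof -
  define C where "C = r\<^sup>2 - M\<^sup>2 / 2"
  have ip: "C + (if x = y then M\<^sup>2 / 2 else 0) \<le> x \<bullet> y" if "x \<in> s" "y \<in> s" for x y
  proof -
    have n: "norm x = r" "norm y = r"
      using that s(2) by auto
    have "dist x y \<le> M"
      using M that by blast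
    then have "(dist x y)\<^sup>2 \<le> M\<^sup>2"
      by (rule power_mono) simp
    moreover have "(dist x y)\<^sup>2 = (norm x)\<^sup>2 + (norm y)\<^sup>2 - 2 * (x \<bullet> y)"
      by (simp add: dist_norm power2_norm_eq_inner inner_diff_left inner_diff_right inner_commute)
    moreover have "x \<bullet> x = r\<^sup>2"
      using n by (simp add: dot_square_norm)
    ultimately show ?thesis
      using n by (auto simp: C_def)
  qed
  have "(\<Sum>x\<in>s. \<Sum>y\<in>s. u x * u y * (C + (if x = y then M\<^sup>2 / 2 else 0)))
      \<le> (\<Sum>x\<in>s. \<Sum>y\<in>s. u x * u y * (x \<bullet> y))"
    by (intro sum_mono mult_left_mono ip) (auto simp: u)
  also have "\<dots> = (\<Sum>x\<in>s. u x *\<^sub>R x) \<bullet> (\<Sum>y\<in>s. u y *\<^sub>R y)"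
    by (simp add: inner_sum_left inner_sum_right sum_distrib_left mult.assoc)
      (subst sum.swap, simp add: inner_commute mult.left_commute)
  also have "\<dots> = 0"
    using u by simp
  finally have "(\<Sum>x\<in>s. \<Sum>y\<in>s. u x * u y * (C + (if x = y then M\<^sup>2 / 2 else 0))) \<le> 0" .
  moreover have "(\<Sum>x\<in>s. \<Sum>y\<in>s. u x * u y * (C + (if x = y then M\<^sup>2 / 2 else 0)))
      = (\<Sum>x\<in>s. \<Sum>y\<in>s. u x * u y * C) + (\<Sum>x\<in>s. \<Sum>y\<in>s. if x = y then u x * u y * (M\<^sup>2 / 2) else 0)"
    by (simp add: sum.distrib[symmetric] distrib_left) (intro sum.cong refl, simp)
  also have "(\<Sum>x\<in>s. \<Sum>y\<in>s. u x * u y * C) = C"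
    using u(2) by (simp add: sum_distrib_left[symmetric] sum_distrib_right[symmetric] mult.assoc)
  also have "(\<Sum>x\<in>s. \<Sum>y\<in>s. if x = y then u x * u y * (M\<^sup>2 / 2) else 0) = M\<^sup>2 / 2 * (\<Sum>x\<in>s. (u x)\<^sup>2)"
    using s(1) by (simp add: power2_eq_square sum_distrib_left mult_ac)
  ultimately show ?thesis
    by (simp add: C_def)
qed

(* A Jung-type estimate; in the plane the hypothesis reads M < sqrt 3 * r. *)
lemma zero_notin_convex_hull_sphere_subset:
  fixes T :: "'a::euclidean_space set"
  assumes T: "T \<subseteq> sphere 0 r" and M: "\<forall>x\<in>T. \<forall>y\<in>T. dist x y \<le> M"
    and small: "real DIM('a) * M\<^sup>2 < 2 * (real DIM('a) + 1) * r\<^sup>2"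
  shows "0 \<notin> convex hull T"
proof
  assume "0 \<in> convex hull T"
  then have "0 \<in> {x. \<exists>s. finite s \<and> s \<subseteq> T \<and> card s \<le> DIM('a) + 1 \<and> x \<in> convex hull s}"
    by (simp only: caratheodory[symmetric])
  then obtain s where s: "finite s" "s \<subseteq> T" "card s \<le> DIM('a) + 1" "0 \<in> convex hull s"
    by blast
  then obtain u where u: "\<forall>x\<in>s. 0 \<le> u x" "sum u s = 1" "(\<Sum>x\<in>s. u x *\<^sub>R x) = 0"
    using convex_hull_finite[OF s(1)] by auto
  define q where "q = (\<Sum>x\<in>s. (u x)\<^sup>2)"
  define n where "n = real DIM('a) + 1"
  have le0: "r\<^sup>2 - M\<^sup>2 / 2 + M\<^sup>2 / 2 * q \<le> 0"
    unfolding q_def using s(1,2) T M u by (intro sphere_convex_combination_zero_bound) blast+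
  have "1 \<le> q * real (card s)"
    using sum_squared_le_sum_of_squares[of u s] u(2) by (simp add: q_def)
  also have "\<dots> \<le> q * n"
    using s(3) by (intro mult_left_mono) (auto simp: n_def q_def sum_nonneg)
  finally have "M\<^sup>2 / 2 \<le> M\<^sup>2 / 2 * (q * n)"
    by (simp add: mult_le_cancel_left1)
  moreover have "n * (r\<^sup>2 - M\<^sup>2 / 2 + M\<^sup>2 / 2 * q) \<le> 0"
    using le0 by (intro mult_nonneg_nonpos) (auto simp: n_def)
  then have "n * (r\<^sup>2 - M\<^sup>2 / 2) + M\<^sup>2 / 2 * (q * n) \<le> 0"
    by (simp add: algebra_simps)
  ultimately have "n * (r\<^sup>2 - M\<^sup>2 / 2) + M\<^sup>2 / 2 \<le> 0"
    by linarith
  then have "2 * (real DIM('a) + 1) * r\<^sup>2 \<le> real DIM('a) * M\<^sup>2"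
    by (simp add: n_def field_simps)
  with small show False
    by linarith
qed

lemma compact_in_open_halfspace:
  fixes T :: "'a::euclidean_space set"
  assumes "compact T" "0 \<notin> convex hull T"
  shows "\<exists>c. \<forall>x\<in>T. x \<bullet> c < 0"
proof -
  obtain a b where "0 < b" and ab: "\<forall>x\<in>convex hull T. b < a \<bullet> x"
    using separating_hyperplane_closed_0[of "convex hull T"] assms
    by (auto simp: compact_convex_hull compact_imp_closed)
  have "0 < a \<bullet> x" if "x \<in> T" for x
    using ab hull_inc[OF that] \<open>0 < b\<close> by force
  then show ?thesis
    by (intro exI[of _ "- a"]) (auto simp: inner_commute)
qed

lemma sphere_point_avoiding_antipodal_free:
  fixes A :: "'a::euclidean_space set"
  assumes "2 \<le> DIM('a)" "closed A" "\<forall>a\<in>A. - a \<notin> A"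
  shows "\<exists>m\<in>sphere 0 1. m \<notin> A \<and> - m \<notin> A"
proof (rule ccontr)
  assume "\<not> ?thesis"
  then have cover: "sphere 0 1 \<subseteq> A \<union> uminus ` A"
    by force
  have "closed (uminus ` A)"
    using assms(2) by (simp add: closed_negations)
  moreover have "A \<inter> uminus ` A \<inter> sphere 0 1 = {}"
    using assms(3) by auto
  moreover have "connected (sphere (0::'a) 1)"
    using assms(1) by (simp add: connected_sphere)
  ultimately have "A \<inter> sphere 0 1 = {} \<or> uminus ` A \<inter> sphere 0 1 = {}"
    using assms(2) cover unfolding connected_closed by blast
  moreover obtain m :: 'a where "m \<in> Basis"
    using nonempty_Basis by blast
  then have m: "m \<in> sphere 0 1" "- m \<in> sphere 0 1"
    by auto
  ultimately show False
  proof (elim disjE)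
    assume A: "A \<inter> sphere 0 1 = {}"
    then have "m \<in> uminus ` A"
      using cover m(1) by blast
    then have "- m \<in> A"
      by force
    with A m(2) show False
      by blast
  next
    assume A: "uminus ` A \<inter> sphere 0 1 = {}"
    then have "m \<in> A"
      using cover m(1) by blast
    then have "- m \<in> uminus ` A"
      by blast
    with A m(2) show False
      by blast
  qed
qed

lemma dist_opposite_directions:
  fixes x y :: "'a::real_normed_vector"
  assumes "x \<noteq> 0" "y \<noteq> 0" "y /\<^sub>R norm y = - (x /\<^sub>R norm x)"
  shows "dist x y = norm x + norm y"
proof -
  define a where "a = x /\<^sub>R norm x"
  have "norm a = 1" "x = norm x *\<^sub>R a"
    using assms(1) by (simp_all add: a_def)
  have "y = norm y *\<^sub>R (y /\<^sub>R norm y)"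
    using assms(2) by simp
  then have "y = norm y *\<^sub>R (- a)"
    by (simp only: assms(3) a_def)
  with \<open>x = norm x *\<^sub>R a\<close> have "x - y = (norm x + norm y) *\<^sub>R a"
    by (metis scaleR_left_distrib scaleR_minus_right diff_minus_eq_add)
  then show ?thesis
    using \<open>norm a = 1\<close> by (simp add: dist_norm)
qed

lemma compact_misses_line_through_0:
  fixes S :: "(real^2) set"
  assumes S: "compact S" and far: "\<forall>x\<in>S. \<rho> < norm x" and close: "\<forall>x\<in>S. \<forall>y\<in>S. dist x y < 2 * \<rho>"
  shows "\<exists>n. \<forall>x\<in>S. x \<bullet> n \<noteq> 0"
proof -
  have nz: "x \<noteq> 0" if "x \<in> S" for x
    using far close that by fastforce
  define A where "A = (\<lambda>x. x /\<^sub>R norm x) ` S"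
  have "compact A"
    unfolding A_def using nz by (intro compact_continuous_image[OF _ S] continuous_intros) auto
  moreover have "- a \<notin> A" if "a \<in> A" for a
  proof
    assume "- a \<in> A"
    then obtain x y where xy: "x \<in> S" "y \<in> S" "a = x /\<^sub>R norm x" "- a = y /\<^sub>R norm y"
      using \<open>a \<in> A\<close> by (auto simp: A_def)
    then have "dist x y = norm x + norm y"
      using nz by (intro dist_opposite_directions) auto
    then show False
      using far close xy by (smt (verit))
  qed
  ultimately have "\<exists>m\<in>sphere 0 1. m \<notin> A \<and> - m \<notin> A"
    by (intro sphere_point_avoiding_antipodal_free) (auto intro: compact_imp_closed)
  then obtain m where m: "norm m = 1" "m \<notin> A" "- m \<notin> A"
    by auto
  have "x \<bullet> rot90 m \<noteq> 0" if x: "x \<in> S" for x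
  proof
    assume "x \<bullet> rot90 m = 0"
    then have xm: "x = (x \<bullet> m) *\<^sub>R m"
      using rot90_unit_expansion[OF m(1), of x] by simp
    then have "norm x = \<bar>x \<bullet> m\<bar>"
      using m(1) by (metis norm_scaleR mult.right_neutral)
    then have "x /\<^sub>R norm x = sgn (x \<bullet> m) *\<^sub>R m"
      using nz[OF x] by (subst (1) xm) (auto simp: sgn_if)
    moreover have "x /\<^sub>R norm x \<in> A"
      using x by (simp add: A_def)
    ultimately show False
      using m nz[OF x] xm by (cases "0 < x \<bullet> m") (auto simp: sgn_if split: if_splits)
  qed
  then show ?thesis
    by blast
qed

definition halfplane_partition :: "real \<Rightarrow> (real^2) set \<Rightarrow> (real^2) set set \<Rightarrow> bool" where
  "halfplane_partition r S \<H> \<longleftrightarrow> finite \<H> \<and> {} \<notin> \<H> \<and> \<Union>\<H> = S \<and> disjoint \<H> \<and>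
     (\<forall>X\<in>\<H>. compact X \<and> (\<exists>c. \<forall>x\<in>X \<inter> sphere 0 r. x \<bullet> c < 0))"

lemma halfplane_partition_small:
  fixes S :: "(real^2) set"
  assumes S: "compact S" and M: "0 \<le> M" "M < sqrt 3 * r" and d: "\<forall>x\<in>S. \<forall>y\<in>S. dist x y \<le> M"
  shows "\<exists>\<H>. halfplane_partition r S \<H>"
proof -
  have "M\<^sup>2 < (sqrt 3 * r)\<^sup>2"
    using M by (intro power_strict_mono) auto
  then have "real DIM(real^2) * M\<^sup>2 < 2 * (real DIM(real^2) + 1) * r\<^sup>2"
    by (simp add: power_mult_distrib)
  then have "0 \<notin> convex hull (S \<inter> sphere 0 r)"
    using d by (intro zero_notin_convex_hull_sphere_subset) auto
  then obtain c where "\<forall>x\<in>S \<inter> sphere 0 r. x \<bullet> c < 0"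
    using compact_in_open_halfspace S by (meson compact_Int_closed closed_sphere)
  then have "halfplane_partition r S ({S} - {{}})"
    using S by (auto simp: halfplane_partition_def disjoint_def)
  then show ?thesis ..
qed

lemma halfplane_partition_far:
  fixes S :: "(real^2) set"
  assumes S: "compact S" and "\<forall>x\<in>S. \<rho> < norm x" "\<forall>x\<in>S. \<forall>y\<in>S. dist x y < 2 * \<rho>"
  shows "\<exists>\<H>. halfplane_partition r S \<H>"
proof -
  obtain n where n: "\<forall>x\<in>S. x \<bullet> n \<noteq> 0"
    using compact_misses_line_through_0[OF assms] by blast
  define A where "A = S \<inter> {x. 0 \<le> n \<bullet> x}"
  define B where "B = S \<inter> {x. n \<bullet> x \<le> 0}"
  have "compact A" "compact B"
    unfolding A_def B_def using S by (simp_all add: compact_Int_closed closed_halfspace_ge closed_halfspace_le)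
  moreover have "\<forall>x\<in>A. x \<bullet> (- n) < 0" "\<forall>x\<in>B. x \<bullet> n < 0"
    using n by (force simp: A_def B_def inner_commute)+
  moreover have "A \<inter> B = {}" "A \<union> B = S"
    using n by (force simp: A_def B_def inner_commute)+
  ultimately have "halfplane_partition r S ({A, B} - {{}})"
    unfolding halfplane_partition_def disjoint_def by blast
  then show ?thesis ..
qed

section \<open>Lower bound for decompositions of the unit disc\<close>

lemma locally_finite_compact_finite:
  assumes "\<forall>x\<in>D. \<exists>U. open U \<and> x \<in> U \<and> finite {P\<in>\<P>. P \<inter> U \<noteq> {}}" "compact K" "K \<subseteq> D"
  shows "finite {P\<in>\<P>. P \<inter> K \<noteq> {}}"
proof -
  from bchoice[OF assms(1)]
  obtain U where U: "\<forall>x\<in>D. open (U x) \<and> x \<in> U x \<and> finite {P\<in>\<P>. P \<inter> U x \<noteq> {}}" ..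
  have "\<And>x. x \<in> K \<Longrightarrow> open (U x)" "K \<subseteq> (\<Union>x\<in>K. U x)"
    using U assms(3) by blast+
  then obtain F where F: "F \<subseteq> K" "finite F" "K \<subseteq> (\<Union>x\<in>F. U x)"
    using compactE_image[OF assms(2), of K U] by blast
  have "{P\<in>\<P>. P \<inter> K \<noteq> {}} \<subseteq> (\<Union>x\<in>F. {P\<in>\<P>. P \<inter> U x \<noteq> {}})"
  proof
    fix P assume "P \<in> {P\<in>\<P>. P \<inter> K \<noteq> {}}"
    then obtain y where "P \<in> \<P>" "y \<in> P" "y \<in> K"
      by blast
    moreover obtain x where "x \<in> F" "y \<in> U x"
      using F(3) \<open>y \<in> K\<close> by blast
    ultimately show "P \<in> (\<Union>x\<in>F. {P\<in>\<P>. P \<inter> U x \<noteq> {}})"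
      by blast
  qed
  moreover have "finite (\<Union>x\<in>F. {P\<in>\<P>. P \<inter> U x \<noteq> {}})"
    using F U assms(3) by (intro finite_UN_I) auto
  ultimately show ?thesis
    by (rule finite_subset)
qed

lemma closedin_ball_piece_halfplane_partition:
  fixes P :: "(real^2) set"
  assumes cl: "closedin (top_of_set (ball 0 1)) P" and "r < 1" and small: "diameter P < sqrt 3"
    and M: "P \<inter> cball 0 (9/10) \<noteq> {} \<Longrightarrow> diameter P \<le> M" "0 \<le> M" "M < sqrt 3 * r"
  shows "\<exists>\<H>. halfplane_partition r (P \<inter> cball 0 r) \<H>"
proof -
  obtain T where "closed T" "P = ball 0 1 \<inter> T"
    using cl by (auto simp: closedin_closed)
  then have "P \<inter> cball 0 r = cball 0 r \<inter> T"
    using \<open>r < 1\<close> by auto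
  then have S: "compact (P \<inter> cball 0 r)"
    using \<open>closed T\<close> by (simp add: compact_Int_closed)
  have "bounded P"
    using \<open>P = ball 0 1 \<inter> T\<close> by (simp add: bounded_Int)
  then have dist_le: "dist x y \<le> diameter P" if "x \<in> P" "y \<in> P" for x y
    using that by (rule diameter_bounded_bound)
  show ?thesis
  proof (cases "P \<inter> cball 0 (9/10) = {}")
    case False
    then show ?thesis
      using dist_le M by (intro halfplane_partition_small[OF S, of M]) force+
  next
    case True
    have "sqrt 3 < 2 * (9/10)"
      by (rule real_less_lsqrt) (simp_all add: power2_eq_square)
    then show ?thesis
      using True small dist_le by (intro halfplane_partition_far[OF S, of "9/10"]) force+
  qed
qed

lemma cball_cover_halfplane_partitions_triple_point:
  assumes r: "0 < r" and fin: "finite \<P>" and cov: "cball 0 r \<subseteq> \<Union>\<P>"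
    and \<H>: "\<forall>P\<in>\<P>. halfplane_partition r (P \<inter> cball 0 r) (\<H> P)"
  shows "\<not> at_most_two_meet (cball 0 r) \<P>"
proof
  assume two: "at_most_two_meet (cball 0 r) \<P>"
  have parts: "\<Union>(\<H> P) = P \<inter> cball 0 r" if "P \<in> \<P>" for P
    using \<H> that by (simp add: halfplane_partition_def)
  have "cball 0 r \<subseteq> \<Union>(\<Union>P\<in>\<P>. \<H> P)"
  proof
    fix x :: "real^2" assume "x \<in> cball 0 r"
    then obtain P where "P \<in> \<P>" "x \<in> P \<inter> cball 0 r"
      using cov by blast
    then show "x \<in> \<Union>(\<Union>P\<in>\<P>. \<H> P)"
      using parts by blast
  qed
  moreover have "finite (\<Union>P\<in>\<P>. \<H> P)" "{} \<notin> (\<Union>P\<in>\<P>. \<H> P)"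
    "\<forall>X\<in>(\<Union>P\<in>\<P>. \<H> P). compact X" "\<forall>X\<in>(\<Union>P\<in>\<P>. \<H> P). \<exists>c. \<forall>x\<in>X \<inter> sphere 0 r. x \<bullet> c < 0"
    using fin \<H> unfolding halfplane_partition_def by auto
  ultimately have "\<not> at_most_two_meet (cball 0 r) (\<Union>P\<in>\<P>. \<H> P)"
    using cball_cover_has_triple_point[OF r] by blast
  moreover have "\<forall>P\<in>\<P>. \<forall>X\<in>\<H> P. X \<subseteq> P" "\<forall>P\<in>\<P>. disjoint (\<H> P)"
    using parts \<H> by (auto simp: halfplane_partition_def)
  ultimately show False
    using at_most_two_meet_refine[OF two] by blast
qed

lemma unit_disk_decomposition_large_piece:
  assumes dec: "decomposition unit_disk \<P>" and two: "at_most_two_meet unit_disk \<P>"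
  shows "\<exists>P\<in>\<P>. sqrt 3 \<le> diameter P"
proof (rule ccontr)
  assume "\<not> ?thesis"
  then have small: "\<forall>P\<in>\<P>. diameter P < sqrt 3"
    by (simp add: not_le)
  note dec' = dec[unfolded decomposition_def unit_disk_def]
  have cl: "\<forall>P\<in>\<P>. closedin (top_of_set (ball 0 1)) P"
    using dec' by (rule conjunct1)
  have un: "\<Union>\<P> = ball 0 1"
    using dec' by (elim conjE)
  have lf: "\<forall>x\<in>ball 0 1. \<exists>U. open U \<and> x \<in> U \<and> finite {P\<in>\<P>. P \<inter> U \<noteq> {}}"
    using dec' by (elim conjE)
  define PA where "PA = {P\<in>\<P>. P \<inter> cball 0 (9/10) \<noteq> {}}"
  have "finite PA"
    unfolding PA_def by (rule locally_finite_compact_finite[OF lf]) auto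
  define M where "M = Max (insert 0 (diameter ` PA))"
  have M: "0 \<le> M" "M < sqrt 3" "\<forall>P\<in>PA. diameter P \<le> M"
    using \<open>finite PA\<close> small by (auto simp: M_def PA_def)
  have "max (9/10) (M / sqrt 3) < 1"
    using M(2) by simp
  then obtain r where r: "max (9/10) (M / sqrt 3) < r" "r < 1"
    using dense by blast
  then have "0 < r" "M < sqrt 3 * r"
    by (auto simp: divide_less_eq mult.commute)
  define PK where "PK = {P\<in>\<P>. P \<inter> cball 0 r \<noteq> {}}"
  have "finite PK"
    unfolding PK_def using r(2) by (intro locally_finite_compact_finite[OF lf]) auto
  have "\<exists>\<H>. halfplane_partition r (P \<inter> cball 0 r) \<H>" if "P \<in> PK" for P
  proof (rule closedin_ball_piece_halfplane_partition[where M = M])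
    show "closedin (top_of_set (ball 0 1)) P" "diameter P < sqrt 3"
      using that cl small by (simp_all add: PK_def)
    show "diameter P \<le> M" if "P \<inter> cball 0 (9/10) \<noteq> {}"
      using that \<open>P \<in> PK\<close> M(3) by (simp add: PK_def PA_def)
  qed (use M(1) \<open>M < sqrt 3 * r\<close> r(2) in auto)
  then have "\<forall>P\<in>PK. \<exists>\<H>. halfplane_partition r (P \<inter> cball 0 r) \<H>"
    by blast
  from bchoice[OF this]
  obtain \<H> where "\<forall>P\<in>PK. halfplane_partition r (P \<inter> cball 0 r) (\<H> P)" ..
  moreover have "cball 0 r \<subseteq> \<Union>\<P>"
    using un r(2) by auto
  then have "cball 0 r \<subseteq> \<Union>PK"
    unfolding PK_def by blast
  ultimately have "\<not> at_most_two_meet (cball 0 r) PK"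
    using cball_cover_halfplane_partitions_triple_point[OF \<open>0 < r\<close> \<open>finite PK\<close>] by blast
  moreover have "at_most_two_meet (cball 0 r) PK"
    by (rule at_most_two_meet_mono[OF two]) (use r(2) in \<open>auto simp: unit_disk_def PK_def\<close>)
  ultimately show False
    by blast
qed

theorem proposition2p5:
  shows "smooth_decomposition unit_disk triangle_decomposition \<and>
         at_most_two_meet unit_disk triangle_decomposition \<and>
         (\<forall>P\<in>triangle_decomposition. diameter P = sqrt 3) \<and>
         (\<forall>\<P>. smooth_decomposition unit_disk \<P> \<and> at_most_two_meet unit_disk \<P> \<longrightarrow>
              (\<exists>P\<in>\<P>. diameter P \<ge> sqrt 3))"
proof -
  obtain a b c where t: "equilateral_triple a b c"
    and eq: "triangle_decomposition = inscribed_triangle_pieces a b c"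
    using triangle_decomposition_eq by blast
  have "\<forall>\<P>. smooth_decomposition unit_disk \<P> \<and> at_most_two_meet unit_disk \<P> \<longrightarrow>
      (\<exists>P\<in>\<P>. sqrt 3 \<le> diameter P)"
    by (auto simp: smooth_decomposition_def intro: unit_disk_decomposition_large_piece)
  then show ?thesis
    unfolding eq using inscribed_triangle_smooth_decomposition[OF t]
      inscribed_triangle_at_most_two_meet[OF t] inscribed_triangle_diameter[OF t] by blast
qed

end
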